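(* Let $\Gamma$ be a trivalent graph. The semigroup $BZ_\Gamma(SL_2(\mathbb{C}))$ is generated by those weightings $w:E(\Gamma)\to\mathbb{Z}_{\ge0}$ in it with $w(e)\le2$ for all $e\in E(\Gamma)$.
   Context: $BZ_\Gamma(SL_2(\mathbb{C}))$ is the additive semigroup of weightings $w:E(\Gamma)\to\mathbb{Z}_{\ge0}$ such that at every vertex $v$, with incident edges $e,f,g$ (counted with multiplicity), one has $|w(e)-w(f)|\le w(g)\le w(e)+w(f)$ and $w(e)+w(f)+w(g)\in2\mathbb{Z}$. *)

theory Defs
  imports Main "HOL-Library.Multiset"
begin

text \<open>A (multi)graph with vertex set V, edge set E and an endpoint map:
  each edge has a 2-element multiset of endpoints (loops allowed, multiple edges allowed).\<close>

definition graph :: "'v set \<Rightarrow> 'e set \<Rightarrow> ('e \<Rightarrow> 'v multiset) \<Rightarrow> bool" where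
  "graph V E ends \<longleftrightarrow> finite V \<and> finite E \<and>
     (\<forall>e\<in>E. size (ends e) = 2 \<and> set_mset (ends e) \<subseteq> V)"

text \<open>Multiset of edges incident to v, counted with multiplicity (a loop counts twice).\<close>
definition incident :: "'e set \<Rightarrow> ('e \<Rightarrow> 'v multiset) \<Rightarrow> 'v \<Rightarrow> 'e multiset" where
  "incident E ends v = (\<Sum>e\<in>E. replicate_mset (count (ends e) v) e)"

definition trivalent :: "'v set \<Rightarrow> 'e set \<Rightarrow> ('e \<Rightarrow> 'v multiset) \<Rightarrow> bool" where
  "trivalent V E ends \<longleftrightarrow> graph V E ends \<and> (\<forall>v\<in>V. size (incident E ends v) = 3)"

definition BZ :: "'v set \<Rightarrow> 'e set \<Rightarrow> ('e \<Rightarrow> 'v multiset) \<Rightarrow> ('e \<Rightarrow> nat) set" where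
  "BZ V E ends = {w. (\<forall>e. e \<notin> E \<longrightarrow> w e = 0) \<and>
     (\<forall>v\<in>V. \<forall>e f g. incident E ends v = {#e, f, g#} \<longrightarrow>
        (int (w g) \<ge> \<bar>int (w e) - int (w f)\<bar> \<and> w g \<le> w e + w f \<and> even (w e + w f + w g)))}"

text \<open>Additive subsemigroup (with 0, the empty sum) of weightings generated by a set S.\<close>
definition gen_semigroup :: "('e \<Rightarrow> nat) set \<Rightarrow> ('e \<Rightarrow> nat) set" where
  "gen_semigroup S = {w. \<exists>ws. set ws \<subseteq> S \<and> w = (\<lambda>e. \<Sum>u\<leftarrow>ws. u e)}"

end

theory Submission
  imports Defs
begin

text \<open>Read a weighting \<open>w\<close> in \<open>BZ\<close> as a strand diagram: at a vertex with incident edges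
  \<open>a, b, c\<close>, exactly \<open>(w a + w b - w c) / 2\<close> strands turn between \<open>a\<close> and \<open>b\<close>. Starting on an
  edge of positive weight, walk through the graph, turning at each vertex only where an unused
  strand of \<open>w\<close> is left. A counting argument at the current vertex shows that such a walk can be
  continued as long as it has not repeated a directed edge, so a longest one closes up into a tour
  traversing every directed edge at most once. Counting how often the tour runs along each edge
  gives a nonzero \<open>u \<in> BZ\<close> with \<open>u \<le> 2\<close>; since the tour only uses strands of \<open>w\<close>, also
  \<open>w - u \<in> BZ\<close>, and induction on the total weight finishes the proof.\<close>

section \<open>Admissible weightings at a trivalent vertex\<close>

lemma sum_mset_image_eq_sum_count:
  "(\<Sum>x\<in>#M. f x) = (\<Sum>x\<in>set_mset M. of_nat (count M x) * (f x :: 'b::comm_semiring_1))"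
proof (induction M)
  case (add a M)
  have "(\<Sum>x\<in>set_mset (add_mset a M). of_nat (count (add_mset a M) x) * f x)
      = (\<Sum>x\<in>insert a (set_mset M). of_nat (count M x) * f x + (if x = a then f x else 0))"
    by (intro sum.cong) (auto simp: algebra_simps)
  also have "\<dots> = (\<Sum>x\<in>insert a (set_mset M). of_nat (count M x) * f x) + f a"
    by (simp add: sum.distrib)
  also have "(\<Sum>x\<in>insert a (set_mset M). of_nat (count M x) * f x) = (\<Sum>x\<in>set_mset M. of_nat (count M x) * f x)"
    by (cases "a \<in># M") (simp_all add: insert_absorb not_in_iff)
  finally show ?case
    using add by (simp add: add.commute)
qed simp

lemma size_mset_3E:
  assumes "size M = 3"
  obtains a b c where "M = {#a, b, c#}"
proof -
  obtain a N where "M = add_mset a N" "size N = 2"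
    using assms size_eq_Suc_imp_eq_union[of M 2] by auto
  moreover obtain b K where "N = add_mset b K" "size K = 1"
    using \<open>size N = 2\<close> size_eq_Suc_imp_eq_union[of N 1] by auto
  moreover obtain c where "K = {#c#}"
    using \<open>size K = 1\<close> size_1_singleton_mset by blast
  ultimately show ?thesis
    using that by blast
qed

lemma size_filter_mset_add_mset [simp]:
  "size {#x \<in># add_mset a M. P x#} = (if P a then 1 else 0) + size {#x \<in># M. P x#}"
  by simp

lemma size_filter_mset_eq_count_image: "size {#x \<in># M. f x = a#} = count (image_mset f M) a"
  by (induction M) auto

lemma size_filter_mset_eq_or:
  "size {#x \<in># M. x = a \<or> x = b#} = (if a = b then count M a else count M a + count M b)"
  by (induction M) auto

lemma add_mset_eq_add_mset_same_iff: "add_mset a M = add_mset b M \<longleftrightarrow> a = b"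
  by (auto dest: arg_cong[where f = "\<lambda>N. count N a"] split: if_splits)

lemma mset_pair_eq_iff: "{#a, b#} = {#c, d#} \<longleftrightarrow> (a = c \<and> b = d) \<or> (a = d \<and> b = c)"
  by (auto simp: add_eq_conv_diff)

definition admissible :: "('e \<Rightarrow> nat) \<Rightarrow> 'e multiset \<Rightarrow> bool" where
  "admissible w N \<longleftrightarrow> even (\<Sum>x\<in>#N. w x) \<and> (\<forall>z\<in>#N. 2 * w z \<le> (\<Sum>x\<in>#N. w x))"

lemma triangle_conditions_iff_admissible:
  assumes "size N = 3"
  shows "(\<forall>e f g. N = {#e, f, g#} \<longrightarrow>
            \<bar>int (w e) - int (w f)\<bar> \<le> int (w g) \<and> w g \<le> w e + w f \<and> even (w e + w f + w g))
         \<longleftrightarrow> admissible w N" (is "?triangle \<longleftrightarrow> _")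
proof
  assume ?triangle
  moreover obtain a b c where "N = {#a, b, c#}"
    using assms size_mset_3E by blast
  ultimately show "admissible w N"
    by (auto simp: admissible_def dest!: spec[of _ a] spec[of _ b] spec[of _ c])
next
  assume "admissible w N"
  then show ?triangle
    by (force simp: admissible_def)
qed

lemma admissible_zero: "admissible (\<lambda>_. 0) N"
  by (simp add: admissible_def)

lemma admissible_add:
  assumes "admissible u N" "admissible w N"
  shows "admissible (\<lambda>x. u x + w x) N"
  using assms by (auto simp: admissible_def sum_mset.distrib add_mono)

lemma admissible_diff:
  assumes "size N = 3" "admissible u N" "admissible w N"
    and le: "\<And>z. z \<in># N \<Longrightarrow> int (\<Sum>x\<in>#N. u x) - 2 * int (u z) \<le> int (\<Sum>x\<in>#N. w x) - 2 * int (w z)"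
  shows "\<forall>z\<in>#N. u z \<le> w z" and "admissible (\<lambda>x. w x - u x) N"
proof -
  obtain a b c where N: "N = {#a, b, c#}"
    using assms(1) size_mset_3E by blast
  have "int (u a) + int (u b) + int (u c) - 2 * int (u z) \<le> int (w a) + int (w b) + int (w c) - 2 * int (w z)"
    if "z \<in># N" for z
    using le[of z] that by (auto simp: N ac_simps)
  from this[of a] this[of b] this[of c]
  have "u a \<le> w a" "u b \<le> w b" "u c \<le> w c"
    by (simp_all add: N)
  then show "\<forall>z\<in>#N. u z \<le> w z"
    by (auto simp: N)
  show "admissible (\<lambda>x. w x - u x) N"
  proof -
    have sum: "(\<Sum>x\<in>#N. w x - u x) + (\<Sum>x\<in>#N. u x) = (\<Sum>x\<in>#N. w x)"
      using \<open>u a \<le> w a\<close> \<open>u b \<le> w b\<close> \<open>u c \<le> w c\<close> by (simp add: N)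
    have "2 * (w z - u z) \<le> (\<Sum>x\<in>#N. w x - u x)" if "z \<in># N" for z
    proof -
      have "u z \<le> w z"
        using \<open>\<forall>z\<in>#N. u z \<le> w z\<close> that by blast
      then show ?thesis
        using le[OF that] sum by linarith
    qed
    moreover have "even (\<Sum>x\<in>#N. w x - u x)"
      using sum assms(2,3) by (metis admissible_def even_add)
    ultimately show ?thesis
      by (simp add: admissible_def)
  qed
qed


text \<open>In the next three lemmas, \<open>N\<close> is the multiset of edges at a vertex and \<open>L z\<close> counts turns
  through the vertex that avoid \<open>z\<close>, i.e.\ enter and leave through the other two slots.
  Then \<open>count N e * (\<Sum>z\<in>set_mset N. L z) - L e\<close> is the number of times the edge \<open>e\<close> is used,
  \<open>count N z * ((\<Sum>x\<in>#N. w x) - 2 * w z)\<close> is twice the number of strands of \<open>w\<close> avoiding \<open>z\<close>,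
  and \<open>d z\<close> is twice the number of those strands left unused.\<close>

lemma turn_slack_identity:
  fixes L w :: "'e \<Rightarrow> nat"
  assumes "size N = 3" "e \<in># N"
  defines "S \<equiv> \<Sum>x\<in>#N. w x"
  defines "d z \<equiv> int (count N z) * (int S - 2 * int (w z)) - 2 * int (L z)"
  shows "2 * (int (L e) + int (count N e) * int (w e)) - 2 * int (count N e) * (\<Sum>z\<in>set_mset N. int (L z))
       = (int (count N e) - 1) * d e + int (count N e) * (\<Sum>z\<in>set_mset N - {e}. d z)"
proof -
  let ?c = "\<lambda>z. int (count N z)"
  have "(\<Sum>z\<in>set_mset N. ?c z * (int S - 2 * int (w z)))
      = int S * (\<Sum>z\<in>set_mset N. ?c z) - 2 * (\<Sum>z\<in>set_mset N. ?c z * int (w z))"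
    by (simp add: algebra_simps sum_subtractf sum_distrib_left sum_distrib_right)
  also have "(\<Sum>z\<in>set_mset N. ?c z * int (w z)) = int S"
    using sum_mset_image_eq_sum_count[of "\<lambda>z. int (w z)" N] by (simp add: S_def multiset.map_comp comp_def)
  also have "(\<Sum>z\<in>set_mset N. ?c z) = 3"
    using sum_mset_image_eq_sum_count[of "\<lambda>z. 1 :: int" N] assms(1) by simp
  finally have "(\<Sum>z\<in>set_mset N. ?c z * (int S - 2 * int (w z))) = int S"
    by simp
  then have "(\<Sum>z\<in>set_mset N. d z) = int S - 2 * (\<Sum>z\<in>set_mset N. int (L z))"
    by (simp add: d_def sum_subtractf sum_distrib_left)
  moreover have "(\<Sum>z\<in>set_mset N. d z) = d e + (\<Sum>z\<in>set_mset N - {e}. d z)"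
    using assms(2) by (simp add: sum.remove)
  ultimately have rest: "(\<Sum>z\<in>set_mset N - {e}. d z) = int S - 2 * (\<Sum>z\<in>set_mset N. int (L z)) - d e"
    by linarith
  show ?thesis
    unfolding rest by (simp add: d_def algebra_simps)
qed

lemma slot_count_le_capacity:
  fixes L w :: "'e \<Rightarrow> nat"
  assumes "size N = 3" "e \<in># N" "admissible w N"
    and L: "\<forall>z\<in>#N. 2 * L z \<le> count N z * ((\<Sum>x\<in>#N. w x) - 2 * w z)"
  shows "count N e * (\<Sum>z\<in>set_mset N. L z) \<le> L e + count N e * w e"
proof -
  define S where "S = (\<Sum>x\<in>#N. w x)"
  define d where "d z = int (count N z) * (int S - 2 * int (w z)) - 2 * int (L z)" for z
  have "d z \<ge> 0" if "z \<in># N" for z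
  proof -
    have "2 * w z \<le> S"
      using \<open>admissible w N\<close> that by (simp add: admissible_def S_def)
    then show ?thesis
      using L that unfolding d_def S_def[symmetric]
      by (metis diff_ge_0_iff_ge of_nat_diff of_nat_le_iff of_nat_mult of_nat_numeral)
  qed
  then have "(int (count N e) - 1) * d e + int (count N e) * (\<Sum>z\<in>set_mset N - {e}. d z) \<ge> 0"
    using assms(2) by (intro add_nonneg_nonneg mult_nonneg_nonneg sum_nonneg) auto
  then have "2 * int (count N e) * (\<Sum>z\<in>set_mset N. int (L z)) \<le> 2 * (int (L e) + int (count N e) * int (w e))"
    using turn_slack_identity[OF assms(1,2), of L w] unfolding d_def S_def by linarith
  then have "int (count N e * (\<Sum>z\<in>set_mset N. L z)) \<le> int (L e + count N e * w e)"
    by simp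
  then show ?thesis
    by linarith
qed

lemma exists_turn_with_slack:
  fixes L w :: "'e \<Rightarrow> nat"
  assumes "size N = 3" "e \<in># N" "admissible w N"
    and L: "\<forall>z\<in>#N. 2 * L z \<le> count N z * ((\<Sum>x\<in>#N. w x) - 2 * w z)"
    and strict: "count N e * (\<Sum>z\<in>set_mset N. L z) < L e + count N e * w e"
  shows "\<exists>z\<in>#N. e \<in># N - {#z#} \<and> 2 * (L z + 1) \<le> count N z * ((\<Sum>x\<in>#N. w x) - 2 * w z)"
proof (rule ccontr)
  assume no_slack: "\<not> ?thesis"
  define S where "S = (\<Sum>x\<in>#N. w x)"
  define d where "d z = int (count N z) * (int S - 2 * int (w z)) - 2 * int (L z)" for z
  have d_eq: "d z = int (count N z * (S - 2 * w z)) - 2 * int (L z)" if "z \<in># N" for z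
    using \<open>admissible w N\<close> that by (simp add: d_def admissible_def S_def of_nat_diff)
  \<comment> \<open>\<open>d z\<close> is even and nonnegative, so without slack it vanishes\<close>
  have d_zero: "d z = 0" if "z \<in># N" "e \<in># N - {#z#}" for z
  proof -
    have "even S"
      using \<open>admissible w N\<close> by (simp add: S_def admissible_def)
    then have "even (d z)"
      by (simp add: d_def)
    moreover
    define D where "D = count N z * (S - 2 * w z)"
    have "2 * L z \<le> D" "\<not> 2 * (L z + 1) \<le> D"
      using L no_slack that by (auto simp: S_def D_def)
    then have "0 \<le> d z" "d z < 2"
      unfolding d_eq[OF that(1)] D_def[symmetric] by simp_all
    ultimately show ?thesis
      by presburger
  qed
  have "(\<Sum>z\<in>set_mset N - {e}. d z) = 0"
    using d_zero \<open>e \<in># N\<close> by (intro sum.neutral) (auto simp: in_diff_count)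
  moreover have "(int (count N e) - 1) * d e = 0"
  proof (cases "count N e \<ge> 2")
    case True
    then show ?thesis
      using d_zero[of e] \<open>e \<in># N\<close> by (simp add: in_diff_count)
  next
    case False
    moreover have "count N e > 0"
      using \<open>e \<in># N\<close> by simp
    ultimately have "count N e = 1"
      by linarith
    then show ?thesis
      by simp
  qed
  ultimately have "(int (count N e) - 1) * d e + int (count N e) * (\<Sum>z\<in>set_mset N - {e}. d z) = 0"
    by simp
  then have "2 * int (count N e) * (\<Sum>z\<in>set_mset N. int (L z)) = 2 * (int (L e) + int (count N e) * int (w e))"
    using turn_slack_identity[OF assms(1,2), of L w] unfolding d_def S_def by linarith
  then have "int (count N e * (\<Sum>z\<in>set_mset N. L z)) = int (L e + count N e * w e)"
    by simp
  then show False
    using strict by linarith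
qed

section \<open>Weightings of trivalent graphs\<close>

definition other_end :: "('e \<Rightarrow> 'v multiset) \<Rightarrow> 'e \<Rightarrow> 'v \<Rightarrow> 'v" where
  "other_end ends e v = (THE u. ends e = {#v, u#})"

lemma ends_eq_other_end:
  assumes "size (ends e) = 2" "v \<in># ends e"
  shows "ends e = {#v, other_end ends e v#}"
proof -
  obtain N where N: "ends e = add_mset v N"
    using assms(2) multi_member_split by metis
  then obtain u where "N = {#u#}"
    using assms(1) size_1_singleton_mset[of N] by auto
  with N have "ends e = {#v, u#}"
    by simp
  moreover have "other_end ends e v = u"
    unfolding other_end_def by (rule the_equality) (use \<open>ends e = {#v, u#}\<close> in auto)
  ultimately show ?thesis
    by simp
qed

lemma other_end_other_end:
  assumes "size (ends e) = 2" "v \<in># ends e"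
  shows "other_end ends e (other_end ends e v) = v"
proof -
  have "ends e = {#v, other_end ends e v#}"
    using assms by (rule ends_eq_other_end)
  moreover from this have "ends e = {#other_end ends e v, other_end ends e (other_end ends e v)#}"
    using assms(1) ends_eq_other_end by (metis add_mset_commute union_single_eq_member)
  ultimately show ?thesis
    by (auto simp: mset_pair_eq_iff)
qed

lemma count_incident:
  assumes "finite E"
  shows "count (incident E ends v) e = (if e \<in> E then count (ends e) v else 0)"
  using assms by (simp add: incident_def count_sum sum.delta')

lemma mem_BZ_iff:
  assumes "trivalent V E ends"
  shows "w \<in> BZ V E ends \<longleftrightarrow> (\<forall>e. e \<notin> E \<longrightarrow> w e = 0) \<and> (\<forall>v\<in>V. admissible w (incident E ends v))"
  using assms triangle_conditions_iff_admissible[of "incident E ends _" w]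
  by (auto simp: BZ_def trivalent_def)

lemma zero_mem_BZ:
  assumes "trivalent V E ends"
  shows "(\<lambda>_. 0) \<in> BZ V E ends"
  using assms by (simp add: mem_BZ_iff admissible_zero)

lemma add_mem_BZ:
  assumes "trivalent V E ends" "u \<in> BZ V E ends" "w \<in> BZ V E ends"
  shows "(\<lambda>e. u e + w e) \<in> BZ V E ends"
  using assms by (simp add: mem_BZ_iff admissible_add)

lemma gen_semigroup_subset:
  assumes "(\<lambda>_. 0) \<in> B" "\<And>u w. u \<in> B \<Longrightarrow> w \<in> B \<Longrightarrow> (\<lambda>e. u e + w e) \<in> B" "G \<subseteq> B"
  shows "gen_semigroup G \<subseteq> B"
proof -
  have "(\<lambda>e. \<Sum>u\<leftarrow>us. u e) \<in> B" if "set us \<subseteq> G" for us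
    using that by (induction us) (use assms in auto)
  then show ?thesis
    unfolding gen_semigroup_def by blast
qed

lemma subset_gen_semigroupI:
  fixes B G :: "('e \<Rightarrow> nat) set"
  assumes "finite E" and supp: "\<And>w e. w \<in> B \<Longrightarrow> e \<notin> E \<Longrightarrow> w e = 0"
    and peel: "\<And>w. w \<in> B \<Longrightarrow> \<exists>e\<in>E. w e > 0 \<Longrightarrow>
                 \<exists>u\<in>G. (\<exists>e\<in>E. u e > 0) \<and> (\<forall>e. u e \<le> w e) \<and> (\<lambda>e. w e - u e) \<in> B"
  shows "B \<subseteq> gen_semigroup G"
proof
  fix w assume "w \<in> B"
  then show "w \<in> gen_semigroup G"
  proof (induction "\<Sum>e\<in>E. w e" arbitrary: w rule: less_induct)
    case less
    show ?case
    proof (cases "\<exists>e\<in>E. w e > 0")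
      case False
      then have "w = (\<lambda>e. \<Sum>u\<leftarrow>[]. u e)"
        using supp[OF less.prems] by fastforce
      then show ?thesis
        unfolding gen_semigroup_def by (intro CollectI exI[of _ "[]"]) simp
    next
      case True
      then obtain u e where u: "u \<in> G" "e \<in> E" "u e > 0" "\<forall>e. u e \<le> w e" "(\<lambda>e. w e - u e) \<in> B"
        using peel[OF less.prems] by blast
      have "(\<Sum>e\<in>E. w e - u e) < (\<Sum>e\<in>E. w e)"
        using u \<open>finite E\<close> by (intro sum_strict_mono_ex1) (auto intro!: bexI[of _ e] diff_less dest: spec[of _ e])
      then obtain us where "set us \<subseteq> G" "(\<lambda>e. w e - u e) = (\<lambda>e. \<Sum>u\<leftarrow>us. u e)"
        using less.hyps[OF _ u(5)] unfolding gen_semigroup_def by auto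
      then have "set (u # us) \<subseteq> G" "w = (\<lambda>e. \<Sum>u\<leftarrow>u # us. u e)"
        using u by (auto simp: fun_eq_iff) (metis le_add_diff_inverse)
      then show ?thesis
        unfolding gen_semigroup_def by blast
    qed
  qed
qed

definition adjacent_pairs :: "'a list \<Rightarrow> ('a \<times> 'a) list" where
  "adjacent_pairs xs = zip xs (tl xs)"

lemma map_fst_adjacent_pairs: "map fst (adjacent_pairs xs) = butlast xs"
  by (simp add: adjacent_pairs_def map_fst_zip_take butlast_conv_take)

lemma map_snd_adjacent_pairs: "map snd (adjacent_pairs xs) = tl xs"
  by (simp add: adjacent_pairs_def map_snd_zip_take)

lemma adjacent_pairs_snoc: "xs \<noteq> [] \<Longrightarrow> adjacent_pairs (xs @ [y]) = adjacent_pairs xs @ [(last xs, y)]"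
  unfolding adjacent_pairs_def by (induction xs rule: induct_list012) auto

lemma lasso_cycle:
  assumes "xs \<noteq> []" "i < length xs"
  defines "C \<equiv> add_mset (last xs, xs ! i) (mset (drop i (adjacent_pairs xs)))"
  shows "image_mset fst C = mset (drop i xs)" and "image_mset snd C = mset (drop i xs)"
proof -
  have "drop i xs = drop i (butlast xs @ [last xs])"
    using assms(1) by simp
  also have "\<dots> = drop i (butlast xs) @ [last xs]"
    using assms(2) by (simp add: drop_append)
  finally have "drop i xs = drop i (butlast xs) @ [last xs]" .
  moreover have "image_mset fst (mset (drop i (adjacent_pairs xs))) = mset (drop i (butlast xs))"
    by (metis mset_map drop_map map_fst_adjacent_pairs)
  ultimately show "image_mset fst C = mset (drop i xs)"
    by (simp add: C_def)
  have "image_mset snd (mset (drop i (adjacent_pairs xs))) = mset (drop (Suc i) xs)"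
    by (metis mset_map drop_map map_snd_adjacent_pairs drop_Suc)
  then show "image_mset snd C = mset (drop i xs)"
    using Cons_nth_drop_Suc[OF assms(2)] by (simp add: C_def) (metis mset.simps(2))
qed

section \<open>Budgeted walks and tours\<close>

locale trivalent_weighting =
  fixes V :: "'v set" and E :: "'e set" and ends :: "'e \<Rightarrow> 'v multiset" and w :: "'e \<Rightarrow> nat"
  assumes trivalent: "trivalent V E ends" and w_BZ: "w \<in> BZ V E ends"
begin

abbreviation inc :: "'v \<Rightarrow> 'e multiset" where
  "inc v \<equiv> incident E ends v"

abbreviation opp :: "'e \<Rightarrow> 'v \<Rightarrow> 'v" where
  "opp e v \<equiv> other_end ends e v"

lemma finite_E: "finite E" and finite_V: "finite V"
  and size_ends: "e \<in> E \<Longrightarrow> size (ends e) = 2"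
  and ends_subset: "e \<in> E \<Longrightarrow> set_mset (ends e) \<subseteq> V"
  and size_inc: "v \<in> V \<Longrightarrow> size (inc v) = 3"
  using trivalent by (auto simp: trivalent_def graph_def)

lemma count_inc: "count (inc v) e = (if e \<in> E then count (ends e) v else 0)"
  using finite_E by (rule count_incident)

lemma mem_inc_iff: "e \<in># inc v \<longleftrightarrow> e \<in> E \<and> v \<in># ends e"
  by (simp add: count_inc flip: count_greater_zero_iff)

lemma w_outside: "e \<notin> E \<Longrightarrow> w e = 0"
  and w_admissible: "v \<in> V \<Longrightarrow> admissible w (inc v)"
  using w_BZ unfolding mem_BZ_iff[OF trivalent] by blast+

lemma ends_eq_opp: "e \<in> E \<Longrightarrow> v \<in># ends e \<Longrightarrow> ends e = {#v, opp e v#}"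
  by (rule ends_eq_other_end[of ends, OF size_ends])

lemma opp_opp: "e \<in> E \<Longrightarrow> v \<in># ends e \<Longrightarrow> opp e (opp e v) = v"
  by (rule other_end_other_end[of ends, OF size_ends])

lemma end_of_edgeE:
  assumes "e \<in> E"
  obtains v where "v \<in># ends e" "v \<in> V"
proof -
  have "ends e \<noteq> {#}"
    using size_ends[OF assms] by auto
  then obtain v where "v \<in># ends e"
    by blast
  then show ?thesis
    using that ends_subset[OF assms] by blast
qed

text \<open>A state \<open>(e, v)\<close> records that a walk traverses the edge \<open>e\<close> towards its end \<open>v\<close>. A turn
  \<open>((e, v), (e', v'))\<close> continues such a walk at \<open>v\<close> along a different slot \<open>e'\<close> of \<open>inc v\<close>
  towards the other end \<open>v'\<close> of \<open>e'\<close>.\<close>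

abbreviation turn_vertex :: "('e \<times> 'v) \<times> ('e \<times> 'v) \<Rightarrow> 'v" where
  "turn_vertex t \<equiv> snd (fst t)"

abbreviation turn_slots :: "('e \<times> 'v) \<times> ('e \<times> 'v) \<Rightarrow> 'e multiset" where
  "turn_slots t \<equiv> {#fst (fst t), fst (snd t)#}"

definition is_turn :: "('e \<times> 'v) \<times> ('e \<times> 'v) \<Rightarrow> bool" where
  "is_turn t \<longleftrightarrow> turn_vertex t \<in> V \<and> ends (fst (snd t)) = {#turn_vertex t, snd (snd t)#}
     \<and> turn_slots t \<subseteq># inc (turn_vertex t)"

definition turns_at :: "(('e \<times> 'v) \<times> ('e \<times> 'v)) multiset \<Rightarrow> 'v \<Rightarrow> nat" where
  "turns_at T v = size {#t \<in># T. turn_vertex t = v#}"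

definition turns_avoiding :: "(('e \<times> 'v) \<times> ('e \<times> 'v)) multiset \<Rightarrow> 'v \<Rightarrow> 'e \<Rightarrow> nat" where
  "turns_avoiding T v z = size {#t \<in># T. turn_vertex t = v \<and> inc v = add_mset z (turn_slots t)#}"

definition slot_usage :: "(('e \<times> 'v) \<times> ('e \<times> 'v)) multiset \<Rightarrow> 'e \<Rightarrow> 'v \<Rightarrow> nat" where
  "slot_usage T e v = (\<Sum>t\<in>#T. if turn_vertex t = v then count (turn_slots t) e else 0)"

text \<open>A multiset of turns is within budget if at every vertex it uses no more turns avoiding a
  slot than the strand diagram of \<open>w\<close> provides.\<close>

definition within_budget :: "(('e \<times> 'v) \<times> ('e \<times> 'v)) multiset \<Rightarrow> bool" where
  "within_budget T \<longleftrightarrow> (\<forall>v\<in>V. \<forall>z\<in>#inc v.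
     2 * turns_avoiding T v z \<le> count (inc v) z * ((\<Sum>x\<in>#inc v. w x) - 2 * w z))"

lemma is_turn_target:
  assumes "is_turn t"
  shows "fst (snd t) \<in> E" "snd (snd t) \<in># ends (fst (snd t))" "snd (snd t) \<in> V"
proof -
  have "fst (snd t) \<in># inc (turn_vertex t)"
    using assms mset_subset_eqD[of "turn_slots t"] by (auto simp: is_turn_def)
  then show "fst (snd t) \<in> E"
    by (simp add: mem_inc_iff)
  moreover show "snd (snd t) \<in># ends (fst (snd t))"
    using assms by (simp add: is_turn_def)
  ultimately show "snd (snd t) \<in> V"
    using ends_subset by blast
qed

lemma is_turn_complement:
  assumes "is_turn t"
  obtains z where "inc (turn_vertex t) = add_mset z (turn_slots t)"
proof -
  let ?v = "turn_vertex t"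
  have sub: "turn_slots t \<subseteq># inc ?v" and "?v \<in> V"
    using assms by (auto simp: is_turn_def)
  then have "size (inc ?v - turn_slots t) = 1"
    using size_inc by (simp add: size_Diff_submset)
  then obtain z where "inc ?v - turn_slots t = {#z#}"
    using size_1_singleton_mset by blast
  then have "inc ?v = add_mset z (turn_slots t)"
    using subset_mset.add_diff_inverse[OF sub] by simp
  then show ?thesis
    using that by blast
qed

lemma slot_usage_add_turns_avoiding:
  assumes "\<forall>t\<in>#T. is_turn t" "e \<in># inc v"
  shows "slot_usage T e v + turns_avoiding T v e = count (inc v) e * turns_at T v"
  using assms(1)
proof (induction T)
  case (add t T)
  have "is_turn t"
    using add.prems by simp
  then obtain z where z: "inc (turn_vertex t) = add_mset z (turn_slots t)"
    by (rule is_turn_complement)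
  have "(if turn_vertex t = v then count (turn_slots t) e else 0)
      + (if turn_vertex t = v \<and> inc v = add_mset e (turn_slots t) then 1 else 0)
      = count (inc v) e * (if turn_vertex t = v then 1 else 0)"
    using z by (cases "turn_vertex t = v") (auto simp del: add_mset_eq_single)
  with add show ?case
    by (simp add: slot_usage_def turns_avoiding_def turns_at_def algebra_simps del: filter_mset_add_mset)
qed (simp add: slot_usage_def turns_avoiding_def turns_at_def)

lemma turns_at_eq_sum_turns_avoiding:
  assumes "\<forall>t\<in>#T. is_turn t"
  shows "turns_at T v = (\<Sum>z\<in>set_mset (inc v). turns_avoiding T v z)"
  using assms
proof (induction T)
  case (add t T)
  have "is_turn t"
    using add.prems by simp
  then obtain z where z: "inc (turn_vertex t) = add_mset z (turn_slots t)"
    by (rule is_turn_complement)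
  have "(\<Sum>y\<in>set_mset (inc v). if turn_vertex t = v \<and> inc v = add_mset y (turn_slots t) then 1 else 0)
      = (if turn_vertex t = v then 1 else (0::nat))"
    using z by (auto simp: sum.delta)
  with add show ?case
    by (simp add: turns_avoiding_def turns_at_def sum.distrib del: filter_mset_add_mset)
qed (simp add: turns_avoiding_def turns_at_def)

lemma slot_usage_eq:
  assumes "\<forall>t\<in>#T. is_turn t" "e \<in> E" "v \<in># ends e"
  shows "slot_usage T e v = size {#t \<in># T. fst t = (e, v)#} + size {#t \<in># T. snd t = (e, opp e v)#}"
  using assms(1)
proof (induction T)
  case (add t T)
  have ends_e: "ends e = {#v, opp e v#}"
    using assms(2,3) by (rule ends_eq_opp)
  have turn: "is_turn t"
    using add.prems by simp
  have "(if turn_vertex t = v then count (turn_slots t) e else 0)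
     = (if fst t = (e, v) then 1 else 0) + (if snd t = (e, opp e v) then 1 else 0)"
  proof (cases "turn_vertex t = v")
    case True
    have "fst (snd t) = e \<longleftrightarrow> snd t = (e, opp e v)"
      using turn True ends_e by (cases "snd t") (auto simp: is_turn_def)
    then show ?thesis
      using True by (cases "fst t") auto
  next
    case False
    then have "snd t \<noteq> (e, opp e v)"
      using turn ends_e by (cases "snd t") (auto simp: is_turn_def mset_pair_eq_iff)
    then show ?thesis
      using False by (cases "fst t") auto
  qed
  with add show ?case
    by (simp add: slot_usage_def)
qed (simp add: slot_usage_def)

lemma slot_usage_le_capacity:
  assumes "\<forall>t\<in>#T. is_turn t" "within_budget T" "v \<in> V" "e \<in># inc v"
  shows "slot_usage T e v \<le> count (inc v) e * w e"
proof -
  have "count (inc v) e * (\<Sum>z\<in>set_mset (inc v). turns_avoiding T v z) \<le> turns_avoiding T v e + count (inc v) e * w e"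
    using assms by (intro slot_count_le_capacity size_inc w_admissible) (auto simp: within_budget_def)
  then show ?thesis
    using slot_usage_add_turns_avoiding[OF assms(1,4)] turns_at_eq_sum_turns_avoiding[OF assms(1)] by simp
qed

lemma within_budget_subset: "S \<subseteq># T \<Longrightarrow> within_budget T \<Longrightarrow> within_budget S"
  unfolding within_budget_def turns_avoiding_def
  by (meson le_trans mult_le_mono2 multiset_filter_mono size_mset_mono)

definition is_state :: "'e \<times> 'v \<Rightarrow> bool" where
  "is_state s \<longleftrightarrow> fst s \<in> E \<and> snd s \<in># ends (fst s)"

definition budgeted_walk :: "('e \<times> 'v) list \<Rightarrow> bool" where
  "budgeted_walk xs \<longleftrightarrow> distinct xs \<and> (\<forall>t\<in>set (adjacent_pairs xs). is_turn t)
     \<and> within_budget (mset (adjacent_pairs xs))"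

lemma finite_states: "finite (Collect is_state)"
proof -
  have "Collect is_state \<subseteq> E \<times> V"
    using ends_subset by (force simp: is_state_def)
  then show ?thesis
    using finite_E finite_V finite_subset by blast
qed

lemma walk_states:
  assumes "\<forall>t\<in>set (adjacent_pairs xs). is_turn t" "is_state (hd xs)" "s \<in> set xs"
  shows "is_state s"
proof (cases "s = hd xs")
  case False
  with assms(3) have "s \<in> set (map snd (adjacent_pairs xs))"
    by (cases xs) (auto simp: map_snd_adjacent_pairs)
  then show ?thesis
    using assms(1) is_turn_target by (auto simp: is_state_def)
qed (use assms(2) in simp)

lemma slot_usage_walk_end:
  assumes "distinct xs" "xs \<noteq> []" "\<forall>t\<in>set (adjacent_pairs xs). is_turn t"
    and "last xs = (e, v)" "is_state (e, v)"
  defines "T \<equiv> mset (adjacent_pairs xs)"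
  shows "slot_usage T e v = (if (e, opp e v) \<in> set (tl xs) then 1 else 0)"
    and "slot_usage T e (opp e v) = (if (e, opp e v) \<in> set (butlast xs) then 1 else 0)
                                   + (if (e, v) \<in> set (tl xs) then 1 else 0)"
proof -
  have turns: "\<forall>t\<in>#T. is_turn t"
    using assms(3) by (simp add: T_def)
  have "e \<in> E" "v \<in># ends e" "opp e v \<in># ends e"
    using assms(5) ends_eq_opp[of e v] by (auto simp: is_state_def)
  have leaving: "size {#t \<in># T. fst t = s#} = (if s \<in> set (butlast xs) then 1 else 0)" for s
  proof -
    have "count (mset (butlast xs)) s = (if s \<in> set (butlast xs) then 1 else 0)"
      using distinct_butlast[OF assms(1)] distinct_count_atmost_1 by metis
    then show ?thesis
      unfolding T_def size_filter_mset_eq_count_image mset_map[symmetric] map_fst_adjacent_pairs .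
  qed
  have entering: "size {#t \<in># T. snd t = s#} = (if s \<in> set (tl xs) then 1 else 0)" for s
  proof -
    have "count (mset (tl xs)) s = (if s \<in> set (tl xs) then 1 else 0)"
      using distinct_tl[OF assms(1)] distinct_count_atmost_1 by metis
    then show ?thesis
      unfolding T_def size_filter_mset_eq_count_image mset_map[symmetric] map_snd_adjacent_pairs .
  qed
  have "last xs \<notin> set (butlast xs)"
    using assms(1,2) by (metis append_butlast_last_id distinct_append disjoint_iff list.set_intros(1))
  then show "slot_usage T e v = (if (e, opp e v) \<in> set (tl xs) then 1 else 0)"
    using slot_usage_eq[OF turns \<open>e \<in> E\<close> \<open>v \<in># ends e\<close>] leaving entering assms(4) by simp
  show "slot_usage T e (opp e v) = (if (e, opp e v) \<in> set (butlast xs) then 1 else 0)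
                                   + (if (e, v) \<in> set (tl xs) then 1 else 0)"
    using slot_usage_eq[OF turns \<open>e \<in> E\<close> \<open>opp e v \<in># ends e\<close>] leaving entering
      opp_opp[OF \<open>e \<in> E\<close> \<open>v \<in># ends e\<close>] by simp
qed

text \<open>The end of a budgeted walk never exhausts its slot: an earlier passage through the edge
  of the last state consumed capacity at both of its ends, and the first edge has positive weight.\<close>

lemma slot_usage_walk_end_less:
  assumes walk: "budgeted_walk xs" "xs \<noteq> []" and last: "last xs = (e, v)" "is_state (e, v)"
    and start: "w (fst (hd xs)) > 0"
  defines "T \<equiv> mset (adjacent_pairs xs)"
  shows "slot_usage T e v < count (inc v) e * w e"
proof -
  let ?u = "opp e v"
  have "e \<in> E" "v \<in># ends e" and ends_e: "ends e = {#v, ?u#}"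
    using last(2) ends_eq_opp[of e v] by (auto simp: is_state_def)
  then have "v \<in> V" "?u \<in> V" "e \<in># inc v" "e \<in># inc ?u"
    using ends_subset[OF \<open>e \<in> E\<close>] by (auto simp: mem_inc_iff)
  have count_e: "count (inc v) e = (if ?u = v then 2 else 1)" "count (inc ?u) e = (if ?u = v then 2 else 1)"
    using ends_e \<open>e \<in> E\<close> by (auto simp: count_inc)
  have turns: "\<forall>t\<in>#T. is_turn t" and "within_budget T"
    using walk by (auto simp: budgeted_walk_def T_def)
  have cap_v: "slot_usage T e v \<le> count (inc v) e * w e"
    and cap_u: "slot_usage T e ?u \<le> count (inc ?u) e * w e"
    using slot_usage_le_capacity[OF turns \<open>within_budget T\<close>] \<open>v \<in> V\<close> \<open>?u \<in> V\<close>
      \<open>e \<in># inc v\<close> \<open>e \<in># inc ?u\<close> by blast+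
  have usage_v: "slot_usage T e v = (if (e, ?u) \<in> set (tl xs) then 1 else 0)"
    and usage_u: "slot_usage T e ?u = (if (e, ?u) \<in> set (butlast xs) then 1 else 0)
                                      + (if (e, v) \<in> set (tl xs) then 1 else 0)"
    using slot_usage_walk_end[OF _ walk(2) _ last] walk(1) unfolding T_def budgeted_walk_def by blast+
  have last_in_tl: "(e, v) \<in> set (tl xs)" if "tl xs \<noteq> []"
    using that last(1) by (metis last_in_set last_tl)
  show ?thesis
  proof (cases "(e, ?u) \<in> set (tl xs)")
    case False
    have "w e > 0"
    proof (cases "tl xs = []")
      case True
      then have "hd xs = (e, v)"
        using walk(2) last(1) by (metis last_ConsL list.collapse)
      then show ?thesis
        using start by simp
    next
      case False
      then show ?thesis
        using cap_u usage_u last_in_tl by (cases "w e") auto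
    qed
    then show ?thesis
      using False usage_v count_e by simp
  next
    case True
    then have "tl xs \<noteq> []"
      by auto
    show ?thesis
    proof (cases "?u = v")
      case True
      then show ?thesis
        using cap_v usage_v count_e \<open>(e, ?u) \<in> set (tl xs)\<close> by (cases "w e") auto
    next
      case False
      have "(e, ?u) \<in> set xs"
        using \<open>(e, ?u) \<in> set (tl xs)\<close> by (cases xs) auto
      then have "(e, ?u) \<in> set (butlast xs)"
        using False last(1) walk(2) by (metis append_butlast_last_id prod.inject rotate1.simps(2) set_ConsD set_rotate1)
      then show ?thesis
        using cap_u usage_u usage_v count_e False last_in_tl[OF \<open>tl xs \<noteq> []\<close>] \<open>(e, ?u) \<in> set (tl xs)\<close>
        by simp
    qed
  qed
qed

lemma budgeted_walk_extends:
  assumes walk: "budgeted_walk xs" "xs \<noteq> []" and last: "last xs = (e, v)" "is_state (e, v)"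
    and start: "w (fst (hd xs)) > 0"
  defines "T \<equiv> mset (adjacent_pairs xs)"
  obtains e' where "is_turn ((e, v), (e', opp e' v))" "within_budget (add_mset ((e, v), (e', opp e' v)) T)"
proof -
  have "e \<in> E" "v \<in># ends e"
    using last(2) by (auto simp: is_state_def)
  then have "v \<in> V" "e \<in># inc v"
    using ends_subset by (auto simp: mem_inc_iff)
  have turns: "\<forall>t\<in>#T. is_turn t" and budget: "within_budget T"
    using walk by (auto simp: budgeted_walk_def T_def)
  have "count (inc v) e * (\<Sum>z\<in>set_mset (inc v). turns_avoiding T v z) < turns_avoiding T v e + count (inc v) e * w e"
    using slot_usage_walk_end_less[OF assms(1-5)] slot_usage_add_turns_avoiding[OF turns \<open>e \<in># inc v\<close>]
      turns_at_eq_sum_turns_avoiding[OF turns] unfolding T_def by simp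
  moreover have "\<forall>z\<in>#inc v. 2 * turns_avoiding T v z \<le> count (inc v) z * ((\<Sum>x\<in>#inc v. w x) - 2 * w z)"
    using budget \<open>v \<in> V\<close> by (simp add: within_budget_def)
  ultimately obtain z where "z \<in># inc v" "e \<in># inc v - {#z#}"
    and slack: "2 * (turns_avoiding T v z + 1) \<le> count (inc v) z * ((\<Sum>x\<in>#inc v. w x) - 2 * w z)"
    using exists_turn_with_slack[OF size_inc[OF \<open>v \<in> V\<close>] \<open>e \<in># inc v\<close> w_admissible[OF \<open>v \<in> V\<close>],
        of "turns_avoiding T v"] by blast
  moreover obtain K where K: "inc v - {#z#} = add_mset e K"
    using \<open>e \<in># inc v - {#z#}\<close> multi_member_split by metis
  moreover have "size K = 1"
    using arg_cong[OF K, of size] size_inc[OF \<open>v \<in> V\<close>] \<open>z \<in># inc v\<close> by (simp add: size_Diff_singleton)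
  then obtain e' where "K = {#e'#}"
    using size_1_singleton_mset by blast
  ultimately have inc_v: "inc v = add_mset z {#e, e'#}"
    by (metis add_mset_add_single insert_DiffM)
  then have "e' \<in> E" "v \<in># ends e'"
    using mem_inc_iff[of e' v] by auto
  then have turn: "is_turn ((e, v), (e', opp e' v))"
    using \<open>v \<in> V\<close> inc_v ends_eq_opp by (simp add: is_turn_def)
  have avoiding_z: "turns_avoiding (add_mset ((e, v), (e', opp e' v)) T) v z = turns_avoiding T v z + 1"
    using inc_v by (simp add: turns_avoiding_def del: filter_mset_add_mset)
  have "within_budget (add_mset ((e, v), (e', opp e' v)) T)"
    unfolding within_budget_def
  proof (intro ballI)
    fix y x assume "y \<in> V" "x \<in># inc y"
    show "2 * turns_avoiding (add_mset ((e, v), e', opp e' v) T) y x \<le> count (inc y) x * ((\<Sum>x\<in>#inc y. w x) - 2 * w x)"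
    proof (cases "y = v \<and> inc y = add_mset x {#e, e'#}")
      case True
      then have "inc v = add_mset x {#e, e'#}"
        by auto
      then have "add_mset x {#e, e'#} = add_mset z {#e, e'#}"
        using inc_v by (simp only:)
      then have "x = z"
        by (simp only: add_mset_eq_add_mset_same_iff)
      then show ?thesis
        using True slack avoiding_z by simp
    next
      case False
      then show ?thesis
        using budget \<open>y \<in> V\<close> \<open>x \<in># inc y\<close> by (auto simp: within_budget_def turns_avoiding_def)
    qed
  qed
  with turn that show ?thesis
    by blast
qed

definition budgeted_tour :: "(('e \<times> 'v) \<times> ('e \<times> 'v)) multiset \<Rightarrow> bool" where
  "budgeted_tour C \<longleftrightarrow> C \<noteq> {#} \<and> (\<forall>t\<in>#C. is_turn t) \<and> within_budget C
     \<and> image_mset snd C = image_mset fst C \<and> (\<forall>s. count (image_mset fst C) s \<le> 1)"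

text \<open>A longest budgeted walk from a state on an edge of positive weight can still be extended by
  a budgeted turn; by maximality the turn returns to a state of the walk, closing a tour.\<close>

lemma exists_budgeted_tour:
  assumes "is_state s\<^sub>0" "w (fst s\<^sub>0) > 0"
  obtains C where "budgeted_tour C"
proof -
  define P where "P xs \<longleftrightarrow> budgeted_walk xs \<and> xs \<noteq> [] \<and> hd xs = s\<^sub>0" for xs
  have "P [s\<^sub>0]"
    by (simp add: P_def budgeted_walk_def adjacent_pairs_def within_budget_def turns_avoiding_def)
  moreover have "length xs < Suc (card (Collect is_state))" if "P xs" for xs
  proof -
    have "set xs \<subseteq> Collect is_state"
      using that walk_states assms(1) by (auto simp: P_def budgeted_walk_def)
    moreover have "length xs = card (set xs)"
      using that by (simp add: P_def budgeted_walk_def distinct_card)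
    ultimately show ?thesis
      using card_mono[OF finite_states, of "set xs"] by simp
  qed
  ultimately obtain xs where "P xs" and longest: "\<And>ys. P ys \<Longrightarrow> length ys \<le> length xs"
    using ex_has_greatest_nat[of P "[s\<^sub>0]" length] by blast
  then have walk: "budgeted_walk xs" "xs \<noteq> []" and "hd xs = s\<^sub>0"
    by (auto simp: P_def)
  obtain e v where last: "last xs = (e, v)"
    by (metis surj_pair)
  moreover have "is_state (e, v)"
    using walk_states[of xs, OF _ _ last_in_set[OF walk(2)]] walk assms(1) \<open>hd xs = s\<^sub>0\<close> last
    by (simp add: budgeted_walk_def)
  ultimately obtain e' where turn: "is_turn ((e, v), (e', opp e' v))"
    and budget: "within_budget (add_mset ((e, v), (e', opp e' v)) (mset (adjacent_pairs xs)))"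
    using budgeted_walk_extends[OF walk] assms(2) \<open>hd xs = s\<^sub>0\<close> by metis
  define s where "s = (e', opp e' v)"
  have "s \<in> set xs"
  proof (rule ccontr)
    assume "s \<notin> set xs"
    then have "P (xs @ [s])"
      using walk \<open>hd xs = s\<^sub>0\<close> turn budget last
      by (auto simp: P_def budgeted_walk_def adjacent_pairs_snoc s_def)
    then show False
      using longest by fastforce
  qed
  then obtain i where i: "i < length xs" "xs ! i = s"
    by (auto simp: in_set_conv_nth)
  define C where "C = add_mset (last xs, xs ! i) (mset (drop i (adjacent_pairs xs)))"
  have "C \<subseteq># add_mset ((e, v), s) (mset (adjacent_pairs xs))"
    using i last by (simp add: C_def) (metis append_take_drop_id mset_append mset_subset_eq_add_right)
  then have "within_budget C"
    using budget by (simp add: s_def within_budget_subset)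
  moreover have "\<forall>t\<in>#C. is_turn t"
    using walk turn last i by (auto simp: C_def s_def budgeted_walk_def dest: in_set_dropD)
  moreover have "image_mset fst C = mset (drop i xs)" "image_mset snd C = mset (drop i xs)"
    using lasso_cycle[OF walk(2) i(1)] by (simp_all add: C_def)
  moreover have "distinct (drop i xs)"
    using walk by (simp add: budgeted_walk_def)
  ultimately have "budgeted_tour C"
    by (auto simp: budgeted_tour_def C_def distinct_count_atmost_1)
  then show ?thesis
    using that by blast
qed

section \<open>Tours give small summands\<close>

definition tour_weight :: "(('e \<times> 'v) \<times> ('e \<times> 'v)) multiset \<Rightarrow> 'e \<Rightarrow> nat" where
  "tour_weight C e = size {#s \<in># image_mset fst C. fst s = e#}"

lemma tour_states:
  assumes "budgeted_tour C" "s \<in># image_mset fst C"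
  shows "is_state s"
proof -
  have "s \<in># image_mset snd C"
    using assms by (simp add: budgeted_tour_def)
  then show ?thesis
    using assms(1) is_turn_target by (auto simp: budgeted_tour_def is_state_def)
qed

lemma tour_weight_eq:
  assumes "budgeted_tour C" "e \<in> E" "v \<in># ends e"
  defines "F \<equiv> image_mset fst C"
  shows "tour_weight C e = (if opp e v = v then count F (e, v) else count F (e, v) + count F (e, opp e v))"
proof -
  have "{#s \<in># F. fst s = e#} = {#s \<in># F. s = (e, v) \<or> s = (e, opp e v)#}"
  proof (rule filter_mset_cong[OF refl])
    fix s assume "s \<in># F"
    then have "is_state s"
      using tour_states[OF assms(1)] by (simp add: F_def)
    then have "snd s = v \<or> snd s = opp e v" if "fst s = e"
      using ends_eq_opp[OF assms(2,3)] that by (auto simp: is_state_def)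
    then show "fst s = e \<longleftrightarrow> s = (e, v) \<or> s = (e, opp e v)"
      by (cases s) auto
  qed
  then show ?thesis
    by (simp add: tour_weight_def F_def size_filter_mset_eq_or)
qed

lemma tour_weight_outside:
  assumes "budgeted_tour C" "e \<notin> E"
  shows "tour_weight C e = 0"
proof -
  have "fst s \<noteq> e" if "s \<in># image_mset fst C" for s
    using tour_states[OF assms(1) that] assms(2) unfolding is_state_def by blast
  then have "{#s \<in># image_mset fst C. fst s = e#} = {#}"
    by simp
  then show ?thesis
    unfolding tour_weight_def by (simp only: size_empty)
qed

lemma tour_weight_pos:
  assumes "budgeted_tour C"
  obtains e where "e \<in> E" "tour_weight C e > 0"
proof -
  have "image_mset fst C \<noteq> {#}"
    using assms by (simp add: budgeted_tour_def)
  then obtain s where s: "s \<in># image_mset fst C"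
    by (metis multiset_nonemptyE)
  then have "fst s \<in> E"
    using tour_states[OF assms] by (simp add: is_state_def)
  moreover have "s \<in># {#s' \<in># image_mset fst C. fst s' = fst s#}"
    using s by simp
  then have "0 < tour_weight C (fst s)"
    unfolding tour_weight_def nonempty_has_size[symmetric] by (metis empty_iff set_mset_empty)
  ultimately show ?thesis
    using that by blast
qed

lemma tour_weight_le_2:
  assumes "budgeted_tour C"
  shows "tour_weight C e \<le> 2"
proof (cases "e \<in> E")
  case True
  then obtain v where "v \<in># ends e"
    by (rule end_of_edgeE)
  then have "tour_weight C e \<le> count (image_mset fst C) (e, v) + count (image_mset fst C) (e, opp e v)"
    using tour_weight_eq[OF assms True] by simp
  moreover have "count (image_mset fst C) s \<le> 1" for s
    using assms unfolding budgeted_tour_def by blast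
  then have "count (image_mset fst C) (e, v) + count (image_mset fst C) (e, opp e v) \<le> 1 + 1"
    by (intro add_le_mono)
  ultimately show ?thesis
    by linarith
qed (simp add: tour_weight_outside[OF assms])

lemma slot_usage_tour:
  assumes "budgeted_tour C" "v \<in> V" "e \<in># inc v"
  shows "slot_usage C e v = count (inc v) e * tour_weight C e"
proof -
  have "e \<in> E" "v \<in># ends e"
    using assms(3) by (auto simp: mem_inc_iff)
  have "image_mset snd C = image_mset fst C"
    using assms(1) by (simp add: budgeted_tour_def)
  then have "slot_usage C e v = count (image_mset fst C) (e, v) + count (image_mset fst C) (e, opp e v)"
    using slot_usage_eq[OF _ \<open>e \<in> E\<close> \<open>v \<in># ends e\<close>, of C] assms(1)
    by (simp add: budgeted_tour_def size_filter_mset_eq_count_image)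
  moreover have "count (inc v) e = (if opp e v = v then 2 else 1)"
    using ends_eq_opp[OF \<open>e \<in> E\<close> \<open>v \<in># ends e\<close>] \<open>e \<in> E\<close> by (simp add: count_inc)
  ultimately show ?thesis
    using tour_weight_eq[OF assms(1) \<open>e \<in> E\<close> \<open>v \<in># ends e\<close>] by simp
qed

lemma tour_weight_add_turns_avoiding:
  assumes "budgeted_tour C" "v \<in> V" "z \<in># inc v"
  shows "count (inc v) z * tour_weight C z + turns_avoiding C v z = count (inc v) z * turns_at C v"
  using slot_usage_add_turns_avoiding[of C, OF _ assms(3)] slot_usage_tour[OF assms] assms(1)
  by (simp add: budgeted_tour_def)

lemma sum_tour_weight_inc:
  assumes "budgeted_tour C" "v \<in> V"
  shows "(\<Sum>x\<in>#inc v. tour_weight C x) = 2 * turns_at C v"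
proof -
  have "(\<Sum>x\<in>#inc v. tour_weight C x) + turns_at C v
      = (\<Sum>x\<in>set_mset (inc v). count (inc v) x * tour_weight C x + turns_avoiding C v x)"
    using turns_at_eq_sum_turns_avoiding[of C v] assms(1)
    by (simp add: sum_mset_image_eq_sum_count sum.distrib budgeted_tour_def)
  also have "\<dots> = (\<Sum>x\<in>set_mset (inc v). count (inc v) x) * turns_at C v"
    using tour_weight_add_turns_avoiding[OF assms] by (simp add: sum_distrib_right)
  also have "(\<Sum>x\<in>set_mset (inc v). count (inc v) x) = 3"
    using sum_mset_image_eq_sum_count[of "\<lambda>_. 1 :: nat" "inc v"] size_inc[OF assms(2)] by simp
  finally show ?thesis
    by simp
qed

text \<open>A tour provides exactly the turns that its own weighting demands.\<close>

lemma turns_avoiding_tour: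
  assumes "budgeted_tour C" "v \<in> V" "z \<in># inc v"
  shows "2 * int (turns_avoiding C v z)
       = int (count (inc v) z) * (int (\<Sum>x\<in>#inc v. tour_weight C x) - 2 * int (tour_weight C z))"
proof -
  have "int (count (inc v) z) * int (tour_weight C z) + int (turns_avoiding C v z)
      = int (count (inc v) z) * int (turns_at C v)"
    using arg_cong[OF tour_weight_add_turns_avoiding[OF assms], of int] by simp
  then show ?thesis
    unfolding sum_tour_weight_inc[OF assms(1,2)] by (simp add: algebra_simps)
qed

lemma tour_weight_admissible:
  assumes "budgeted_tour C" "v \<in> V"
  shows "admissible (tour_weight C) (inc v)"
  unfolding admissible_def
proof
  show "even (\<Sum>x\<in>#inc v. tour_weight C x)"
    using sum_tour_weight_inc[OF assms] by simp
  show "\<forall>z\<in>#inc v. 2 * tour_weight C z \<le> (\<Sum>x\<in>#inc v. tour_weight C x)"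
  proof
    fix z assume "z \<in># inc v"
    define S where "S = (\<Sum>x\<in>#inc v. tour_weight C x)"
    have "0 \<le> int (count (inc v) z) * (int S - 2 * int (tour_weight C z))"
      using turns_avoiding_tour[OF assms \<open>z \<in># inc v\<close>] unfolding S_def[symmetric] by linarith
    moreover have "count (inc v) z > 0"
      using \<open>z \<in># inc v\<close> by simp
    ultimately have "2 * tour_weight C z \<le> S"
      by (simp add: zero_le_mult_iff)
    then show "2 * tour_weight C z \<le> (\<Sum>x\<in>#inc v. tour_weight C x)"
      by (simp only: S_def)
  qed
qed

lemma tour_weight_slack_le:
  assumes "budgeted_tour C" "v \<in> V" "z \<in># inc v"
  shows "int (\<Sum>x\<in>#inc v. tour_weight C x) - 2 * int (tour_weight C z) \<le> int (\<Sum>x\<in>#inc v. w x) - 2 * int (w z)"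
proof -
  define S where "S = (\<Sum>x\<in>#inc v. w x)"
  have "2 * turns_avoiding C v z \<le> count (inc v) z * (S - 2 * w z)"
    using assms(1-3) by (simp add: budgeted_tour_def within_budget_def S_def)
  moreover have "2 * w z \<le> S"
    using w_admissible[OF assms(2)] assms(3) by (simp add: admissible_def S_def)
  then have "int (S - 2 * w z) = int S - 2 * int (w z)"
    by (simp add: of_nat_diff)
  moreover note of_nat_le_iff[of "2 * turns_avoiding C v z" "count (inc v) z * (S - 2 * w z)", where 'a = int]
  ultimately have "2 * int (turns_avoiding C v z) \<le> int (count (inc v) z) * (int S - 2 * int (w z))"
    by simp
  then have "int (count (inc v) z) * (int (\<Sum>x\<in>#inc v. tour_weight C x) - 2 * int (tour_weight C z))
      \<le> int (count (inc v) z) * (int S - 2 * int (w z))"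
    unfolding turns_avoiding_tour[OF assms] .
  moreover have "count (inc v) z > 0"
    using assms(3) by simp
  ultimately show ?thesis
    unfolding S_def by simp
qed

lemma exists_small_summand:
  assumes "\<exists>e\<in>E. w e > 0"
  shows "\<exists>u\<in>{u \<in> BZ V E ends. \<forall>e\<in>E. u e \<le> 2}.
           (\<exists>e\<in>E. u e > 0) \<and> (\<forall>e. u e \<le> w e) \<and> (\<lambda>e. w e - u e) \<in> BZ V E ends"
proof -
  obtain e\<^sub>0 v\<^sub>0 where "e\<^sub>0 \<in> E" "w e\<^sub>0 > 0" "v\<^sub>0 \<in># ends e\<^sub>0"
    using assms end_of_edgeE by blast
  then obtain C where C: "budgeted_tour C"
    using exists_budgeted_tour[of "(e\<^sub>0, v\<^sub>0)"] by (auto simp: is_state_def)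
  define u where "u = tour_weight C"
  have diff: "\<forall>z\<in>#inc v. u z \<le> w z" "admissible (\<lambda>x. w x - u x) (inc v)" if "v \<in> V" for v
    using admissible_diff[OF size_inc tour_weight_admissible[OF C] w_admissible tour_weight_slack_le[OF C]] that
    by (simp_all add: u_def)
  have "u e \<le> w e" for e
  proof (cases "e \<in> E")
    case True
    then obtain v where "v \<in># ends e" "v \<in> V"
      by (rule end_of_edgeE)
    then show ?thesis
      using diff(1) True by (simp add: mem_inc_iff)
  qed (simp add: u_def tour_weight_outside[OF C])
  moreover have "u \<in> BZ V E ends"
    using tour_weight_admissible[OF C] tour_weight_outside[OF C]
    by (simp add: mem_BZ_iff[OF trivalent] u_def)
  moreover have "(\<lambda>e. w e - u e) \<in> BZ V E ends"
    using diff(2) w_outside by (simp add: mem_BZ_iff[OF trivalent])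
  moreover have "\<exists>e\<in>E. u e > 0"
    using tour_weight_pos[OF C] unfolding u_def by blast
  ultimately show ?thesis
    using tour_weight_le_2[OF C] by (auto simp: u_def)
qed

end

theorem mainTheorem14:
  fixes V :: "'v set" and E :: "'e set" and ends :: "'e \<Rightarrow> 'v multiset"
  assumes "trivalent V E ends"
  shows "BZ V E ends = gen_semigroup {w \<in> BZ V E ends. \<forall>e\<in>E. w e \<le> 2}"
proof
  show "gen_semigroup {w \<in> BZ V E ends. \<forall>e\<in>E. w e \<le> 2} \<subseteq> BZ V E ends"
    using zero_mem_BZ[OF assms] add_mem_BZ[OF assms] by (intro gen_semigroup_subset) auto
  have "finite E"
    using assms by (simp add: trivalent_def graph_def)
  then show "BZ V E ends \<subseteq> gen_semigroup {w \<in> BZ V E ends. \<forall>e\<in>E. w e \<le> 2}"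
  proof (rule subset_gen_semigroupI)
    show "w e = 0" if "w \<in> BZ V E ends" "e \<notin> E" for w e
      using that by (simp add: mem_BZ_iff[OF assms])
    show "\<exists>u\<in>{w \<in> BZ V E ends. \<forall>e\<in>E. w e \<le> 2}.
            (\<exists>e\<in>E. u e > 0) \<and> (\<forall>e. u e \<le> w e) \<and> (\<lambda>e. w e - u e) \<in> BZ V E ends"
      if "w \<in> BZ V E ends" "\<exists>e\<in>E. w e > 0" for w
      using trivalent_weighting.exists_small_summand[OF trivalent_weighting.intro[OF assms that(1)] that(2)] .
  qed
qed

end
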